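(* Let $n\ge 1$ be an integer, let $0<\epsilon_\text{B}\le 1/2$ and $0<\delta\le 1/2$, and let $K_\text{B}=P_\text{A}G_\text{B}L_\text{B}>0$ and $K_\text{E}=P_\text{A}G_\text{E}L_\text{E}>0$ be constants. Let $|h_\text{B}|$ and $|h_\text{E}|$ be random variables, each with a shadowed Rician distribution: for $i\in\{\text{B},\text{E}\}$, with parameters $b_i>0$, $m_i>0$, $\Omega_i\ge 0$, the density of $|h_i|$ is $$f_{|h_i|}(x)=\left(\frac{2b_im_i}{2b_im_i+\Omega_i}\right)^{m_i}\frac{x}{2b_i}\exp\!\left(-\frac{x^2}{2b_i}\right){}_1F_1\!\left(m_i,1,\frac{\Omega_i x^2}{2b_i(2b_im_i+\Omega_i)}\right),\quad x\ge 0.$$ Set $\text{SNR}_i=K_i|h_i|^2$, $$V_i=\frac{1}{(\ln 2)^2}\cdot\frac{\text{SNR}_i^2+2\,\text{SNR}_i}{(1+\text{SNR}_i)^2},$$ and define the finite-blocklength secrecy rate $$R_s=\Big[\log_2(1+\text{SNR}_\text{B})-\log_2(1+\text{SNR}_\text{E})\Big]^+-\sqrt{\frac{V_\text{B}}{n}}\,Q^{-1}(\epsilon_\text{B})-\sqrt{\frac{V_\text{E}}{n}}\,Q^{-1}(\delta),$$ where $[x]^+=\max(0,x)$ and $Q^{-1}$ is the inverse of $Q(x)=\frac{1}{\sqrt{2\pi}}\int_x^\infty e^{-\nu^2/2}\,d\nu$. For $i\in\{\text{B},\text{E}\}$ let $\phi_i(\omega)=\mathbb{E}[|h_i|^\omega]$,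 so that $$\phi_i(\omega)=\left(\frac{2b_im_i}{2b_im_i+\Omega_i}\right)^{m_i}(2b_i)^{\omega/2}\,\Gamma\!\left(\frac{\omega}{2}+1\right){}_2F_1\!\left(\frac{\omega}{2}+1,m_i,1,\frac{\Omega_i}{2b_im_i+\Omega_i}\right),$$ let $\phi_\text{B}'(0)=\frac{d}{d\omega}\phi_\text{B}(\omega)\big|_{\omega=0}$ (so $2\phi'_\text{B}(0)=\mathbb{E}[\ln|h_\text{B}|^2]$), and let $\overline{\text{SNR}}_\text{B}=\mathbb{E}[\text{SNR}_\text{B}]=K_\text{B}\phi_\text{B}(2)$ and $\overline{\text{SNR}}_\text{E}=\mathbb{E}[\text{SNR}_\text{E}]=K_\text{E}\phi_\text{E}(2)$. Then $\mathbb{E}[R_s]\ge\tilde R$, where $$\tilde R=\log_2\!\Big(1+K_\text{B}\exp\big(2\phi'_\text{B}(0)\big)\Big)-\log_2\!\big(1+\overline{\text{SNR}}_\text{E}\big)-\frac{Q^{-1}(\epsilon_\text{B})}{\ln 2\,\sqrt n}\sqrt{1-\frac{1}{(1+\overline{\text{SNR}}_\text{B})^2}}-\frac{Q^{-1}(\delta)}{\ln 2\,\sqrt n}\sqrt{1-\frac{1}{(1+\overline{\text{SNR}}_\text{E})^2}}.$$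
   Context: ${}_1F_1$ is the confluent hypergeometric function, ${}_2F_1$ the Gauss hypergeometric function, $\Gamma$ the gamma function. Physically, $K_i$ collects the ground-station transmit power normalized by noise power and transmit antenna gain ($P_\text{A}$), the receive-direction antenna gain $G_i$ and the free-space path loss $L_i$ toward satellite $i$ (B = legitimate receiver Bob, E = eavesdropper Eve); $\epsilon_\text{B}$ is the target error probability at Bob, $\delta$ the secrecy (information-leakage) constraint, and $n$ the blocklength. Expectations are over the channel distributions. *)

theory Defs
  imports "HOL-Probability.Probability"
begin

definition hyp1F1 :: "real \<Rightarrow> real \<Rightarrow> real \<Rightarrow> real" where
  "hyp1F1 a b z = (\<Sum>k. pochhammer a k / pochhammer b k * z ^ k / fact k)"

definition sr_pdf :: "real \<Rightarrow> real \<Rightarrow> real \<Rightarrow> real \<Rightarrow> real" where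
  "sr_pdf b m \<Omega> x =
     (if 0 \<le> x then
        (2*b*m / (2*b*m + \<Omega>)) powr m * (x / b) * exp (-(x^2) / (2*b))
        * hyp1F1 m 1 (\<Omega> * x^2 / (2*b*(2*b*m + \<Omega>)))
      else 0)"

definition Qfun :: "real \<Rightarrow> real" where
  "Qfun x = (LBINT v:{x..}. exp (-(v^2) / 2)) / sqrt (2*pi)"

definition Qinv :: "real \<Rightarrow> real" where
  "Qinv e = (THE x. Qfun x = e)"

definition dispersion :: "real \<Rightarrow> real" where
  "dispersion x = (1 / (ln 2)^2) * ((x^2 + 2*x) / (1 + x)^2)"

end

(*
  Dropping the positive part leaves E log2 (1 + SNR_B) - E log2 (1 + SNR_E) minus the two
  dispersion terms, and each piece is bounded by Jensen's inequality: log (1 + x) and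
  1 - 1 / (1 + x)^2 are concave (the latter is combined with E sqrt U <= sqrt (E U)), while
  y |-> log (1 + K e^y) is convex, so E log (1 + K |h_B|^2) >= log (1 + K exp (2 E ln |h_B|)).
  Here E ln |h_B| = phi_B'(0) because phi_B is the moment generating function of ln |h_B|, which
  is finite near 0: the shadowed Rician density vanishes linearly at 0 and has a Gaussian tail,
  since 1F1 (m; 1; z) = O (exp (beta z)) for every beta > 1. The same bounds give all the
  integrability needed. Finally Q^-1 e >= 0 for e <= 1/2 since Q is continuous, strictly
  decreasing and Q 0 = 1/2.
*)

theory Submission
  imports Defs
begin

section \<open>The Gaussian Q-function\<close>

abbreviation std_normal :: "real measure" where
  "std_normal \<equiv> density lborel std_normal_density"

lemma real_distribution_std_normal: "real_distribution std_normal"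
  unfolding real_distribution_def real_distribution_axioms_def
  using prob_space_normal_density by auto

lemma null_sets_std_normal_iff:
  assumes "A \<in> sets borel"
  shows "A \<in> null_sets std_normal \<longleftrightarrow> A \<in> null_sets lborel"
proof -
  have pos: "ennreal (std_normal_density x) \<noteq> 0" for x
    using normal_density_pos[of 1 0 x] by simp
  have "A \<in> null_sets std_normal \<longleftrightarrow>
      A \<in> sets borel \<and> (AE x in lborel. x \<in> A \<longrightarrow> ennreal (std_normal_density x) = 0)"
    using null_sets_density_iff[of "\<lambda>x. ennreal (std_normal_density x)" lborel A] by simp
  also have "\<dots> \<longleftrightarrow> A \<in> null_sets lborel"
    using assms pos by (simp add: AE_iff_null_sets)
  finally show ?thesis .
qed

lemma measure_std_normal:
  assumes "A \<in> sets borel"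
  shows "measure std_normal A = (\<integral>v. std_normal_density v * indicator A v \<partial>lborel)"
proof -
  interpret real_distribution std_normal by (rule real_distribution_std_normal)
  have "measure std_normal A = (\<integral>v. indicator A v \<partial>std_normal)"
    using assms by simp
  also have "\<dots> = (\<integral>v. std_normal_density v * indicator A v \<partial>lborel)"
    using assms by (subst integral_density) auto
  finally show ?thesis .
qed

lemma Qfun_eq_measure: "Qfun x = measure std_normal {x..}"
proof -
  have "measure std_normal {x..} = (\<integral>v. std_normal_density v * indicator {x..} v \<partial>lborel)"
    by (simp add: measure_std_normal)
  also have "\<dots> = (\<integral>v. indicator {x..} v * exp (-(v^2)/2) \<partial>lborel) / sqrt (2*pi)"
    by (simp add: std_normal_density_def mult_ac)
  finally show ?thesis unfolding Qfun_def set_lebesgue_integral_def by simp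
qed

lemma measure_std_normal_singleton: "measure std_normal {x} = 0"
  by (intro measure_eq_0_null_sets) (simp add: null_sets_std_normal_iff finite_imp_null_set_lborel)

lemma Qfun_eq_one_minus_cdf: "Qfun x = 1 - cdf std_normal x"
proof -
  interpret real_distribution std_normal by (rule real_distribution_std_normal)
  have "cdf std_normal x = measure std_normal {..<x}"
    unfolding cdf_def ivl_disj_un(2)[symmetric]
    using measure_std_normal_singleton by (subst finite_measure_Union) auto
  moreover have "{x..} = space std_normal - {..<x}"
    by auto
  then have "measure std_normal {x..} = 1 - measure std_normal {..<x}"
    using prob_compl[of "{..<x}"] by simp
  ultimately show ?thesis by (simp add: Qfun_eq_measure)
qed

lemma continuous_on_Qfun: "continuous_on S Qfun"
proof -
  interpret real_distribution std_normal by (rule real_distribution_std_normal)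
  have "isCont (cdf std_normal) x" for x
    by (simp add: isCont_cdf measure_std_normal_singleton)
  then show ?thesis
    unfolding Qfun_eq_one_minus_cdf[abs_def]
    by (intro continuous_at_imp_continuous_on ballI continuous_intros)
qed

lemma Qfun_strict_antimono:
  assumes "x < y"
  shows "Qfun y < Qfun x"
proof -
  interpret real_distribution std_normal by (rule real_distribution_std_normal)
  have "{x<..y} \<notin> null_sets lborel"
    using assms by (simp add: null_sets_def)
  then have "{x<..y} \<notin> null_sets std_normal"
    by (simp add: null_sets_std_normal_iff)
  then have "emeasure std_normal {x<..y} \<noteq> 0"
    using null_setsI[of std_normal "{x<..y}"] by auto
  then have "measure std_normal {x<..y} \<noteq> 0"
    by (simp add: emeasure_eq_measure)
  then show ?thesis
    unfolding Qfun_eq_one_minus_cdf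
    using cdf_diff_eq[OF assms] measure_nonneg[of std_normal "{x<..y}"] by linarith
qed

lemma Qfun_at_top: "(Qfun \<longlongrightarrow> 0) at_top"
proof -
  interpret real_distribution std_normal by (rule real_distribution_std_normal)
  have "((\<lambda>x. 1 - cdf std_normal x) \<longlongrightarrow> 1 - 1) at_top"
    by (intro tendsto_intros cdf_lim_at_top_prob)
  then show ?thesis by (simp add: Qfun_eq_one_minus_cdf[abs_def])
qed

lemma Qfun_0: "Qfun 0 = 1/2"
proof -
  have rescale: "std_normal_density (0 + sqrt 2 * v) * indicator {0..} (0 + sqrt 2 * v) =
      indicator {0..} v * exp (- (v^2)) / sqrt (2*pi)" for v :: real
    by (auto simp: std_normal_density_def power_mult_distrib indicator_def zero_le_mult_iff)
  have "Qfun 0 = (\<integral>v. std_normal_density v * indicator {0..} v \<partial>lborel)"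
    by (simp add: Qfun_eq_measure measure_std_normal)
  also have "\<dots> = sqrt 2 *
      (\<integral>v. std_normal_density (0 + sqrt 2 * v) * indicator {0..} (0 + sqrt 2 * v) \<partial>lborel)"
    by (subst lborel_integral_real_affine[where c="sqrt 2" and t=0]) auto
  also have "\<dots> = sqrt 2 * (\<integral>v. indicator {0..} v * exp (- (v^2)) \<partial>lborel) / sqrt (2*pi)"
    unfolding rescale by simp
  also have "\<dots> = 1/2"
    using has_bochner_integral_integral_eq[OF gaussian_moment_0] by (simp add: real_sqrt_mult)
  finally show ?thesis .
qed

lemma Qinv_eqI: "Qfun x = e \<Longrightarrow> Qinv e = x"
  unfolding Qinv_def
  by (rule the_equality, assumption) (metis Qfun_strict_antimono less_irrefl neq_iff)

lemma Qinv_nonneg: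
  assumes "0 < e" "e \<le> 1/2"
  shows "Qinv e \<ge> 0"
proof -
  obtain b0 where "\<And>x. x \<ge> b0 \<Longrightarrow> Qfun x < e"
    using order_tendstoD(2)[OF Qfun_at_top \<open>0 < e\<close>] by (auto simp: eventually_at_top_linorder)
  then obtain b where "b \<ge> 0" "Qfun b \<le> e"
    by (metis max.cobounded1 max.cobounded2 less_imp_le)
  then obtain x where "0 \<le> x" "Qfun x = e"
    using IVT2'[of Qfun b e 0] continuous_on_Qfun assms(2) by (auto simp: Qfun_0)
  then show ?thesis using Qinv_eqI[of x e] by simp
qed

section \<open>The shadowed Rician density\<close>

(* These are the terms of the binomial series of (1 - 1/beta) powr (-m). *)
lemma pochhammer_over_fact_le_geometric:
  fixes m \<beta> :: real
  assumes "m > 0" "\<beta> > 1"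
  obtains D where "D > 0" "\<And>k. pochhammer m k / fact k \<le> D * \<beta> ^ k"
proof -
  have "summable (\<lambda>k. ((-m) gchoose k) * (-1/\<beta>) ^ k)"
    using gen_binomial_real[of "-1/\<beta>" "-m"] assms(2) by (simp add: sums_summable)
  also have "(\<lambda>k. ((-m) gchoose k) * (-1/\<beta>) ^ k) = (\<lambda>k. pochhammer m k / fact k * (1/\<beta>) ^ k)"
  proof
    fix k
    have "((-m) gchoose k) * (-1/\<beta>) ^ k = ((-1) * (-1/\<beta>)) ^ k * pochhammer m k / fact k"
      by (simp add: gbinomial_pochhammer flip: power_mult_distrib)
    then show "((-m) gchoose k) * (-1/\<beta>) ^ k = pochhammer m k / fact k * (1/\<beta>) ^ k"
      by simp
  qed
  finally have "Bseq (\<lambda>k. pochhammer m k / fact k * (1/\<beta>) ^ k)"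
    by (blast intro: convergent_imp_Bseq convergentI summable_LIMSEQ_zero)
  then obtain D where "D > 0" and D: "\<And>k. norm (pochhammer m k / fact k * (1/\<beta>) ^ k) \<le> D"
    by (auto elim: BseqE)
  have "pochhammer m k / fact k \<le> D * \<beta> ^ k" for k
    using D[of k] assms by (simp add: pochhammer_nonneg field_simps)
  with \<open>D > 0\<close> show thesis by (rule that)
qed

lemma hyp1F1_le_exp:
  fixes m \<beta> :: real
  assumes "m > 0" "\<beta> > 1"
  obtains D where "D > 0" "\<And>z. z \<ge> 0 \<Longrightarrow> 0 \<le> hyp1F1 m 1 z \<and> hyp1F1 m 1 z \<le> D * exp (\<beta> * z)"
proof -
  obtain D where "D > 0" and D: "\<And>k. pochhammer m k / fact k \<le> D * \<beta> ^ k"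
    using pochhammer_over_fact_le_geometric[OF assms] by blast
  have "0 \<le> hyp1F1 m 1 z \<and> hyp1F1 m 1 z \<le> D * exp (\<beta> * z)" if "z \<ge> 0" for z
  proof -
    define t where "t k = pochhammer m k / fact k * z ^ k / fact k" for k
    define u where "u k = D * ((\<beta> * z) ^ k / fact k)" for k
    have t_nonneg: "t k \<ge> 0" for k
      unfolding t_def using assms \<open>z \<ge> 0\<close> by (simp add: pochhammer_nonneg)
    have t_le_u: "t k \<le> u k" for k
    proof -
      have "t k \<le> D * \<beta> ^ k * z ^ k / fact k"
        unfolding t_def using D[of k] \<open>z \<ge> 0\<close> by (intro divide_right_mono mult_right_mono) auto
      then show ?thesis
        by (simp add: u_def power_mult_distrib mult.assoc)
    qed
    have u: "u sums (D * exp (\<beta> * z))"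
      unfolding u_def using exp_converges[of "\<beta> * z"]
      by (intro sums_mult) (simp add: divide_inverse mult.commute)
    have t: "summable t"
      by (rule summable_comparison_test[OF _ sums_summable[OF u]]) (use t_nonneg t_le_u in auto)
    have "hyp1F1 m 1 z = suminf t"
      unfolding hyp1F1_def t_def by (simp add: pochhammer_fact)
    then show ?thesis
      using suminf_nonneg[OF t t_nonneg] suminf_le[OF t_le_u t sums_summable[OF u]] sums_unique[OF u]
      by simp
  qed
  with \<open>D > 0\<close> show thesis by (rule that)
qed

lemma sr_pdf_nonpos:
  "x \<le> 0 \<Longrightarrow> sr_pdf b m \<Omega> x = 0"
  by (cases "x = 0") (auto simp: sr_pdf_def)

lemma sr_pdf_gaussian_tail:
  assumes "b > 0" "m > 0" "\<Omega> \<ge> 0"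
  obtains \<alpha> C where "\<alpha> > 0" "\<And>x. 0 \<le> sr_pdf b m \<Omega> x"
    "\<And>x. x \<ge> 0 \<Longrightarrow> sr_pdf b m \<Omega> x \<le> C * x * exp (- \<alpha> * x^2)"
proof -
  define q where "q = \<Omega> / (2*b*m + \<Omega>)"
  have "2*b*m + \<Omega> > 0"
    using assms by (simp add: add_pos_nonneg)
  then have q: "0 \<le> q" "q < 1"
    using assms by (auto simp: q_def field_simps)
  (* 1 < beta and beta * q < 1: the factor exp (- x^2 / (2 b)) still beats the growth of 1F1. *)
  define \<beta> where "\<beta> = 2 / (1 + q)"
  have "\<beta> > 1" "\<beta> * q < 1"
    using q by (simp_all add: \<beta>_def field_simps)
  obtain D where D: "\<And>z. z \<ge> 0 \<Longrightarrow> 0 \<le> hyp1F1 m 1 z \<and> hyp1F1 m 1 z \<le> D * exp (\<beta> * z)"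
    using hyp1F1_le_exp[OF \<open>m > 0\<close> \<open>\<beta> > 1\<close>] by blast
  define A where "A = (2*b*m / (2*b*m + \<Omega>)) powr m"
  have "A \<ge> 0"
    by (simp add: A_def)
  define \<alpha> where "\<alpha> = (1 - \<beta> * q) / (2*b)"
  have "\<alpha> > 0"
    using \<open>\<beta> * q < 1\<close> assms by (simp add: \<alpha>_def)
  have z: "\<Omega> * x^2 / (2*b*(2*b*m + \<Omega>)) = q * x^2 / (2*b)" for x
    using assms by (simp add: q_def field_simps)
  have nonneg: "0 \<le> sr_pdf b m \<Omega> x" for x
    using D[of "q * x^2 / (2*b)"] q assms \<open>A \<ge> 0\<close> by (simp add: sr_pdf_def z A_def[symmetric])
  have "sr_pdf b m \<Omega> x \<le> (A * D / b) * x * exp (- \<alpha> * x^2)" if "x \<ge> 0" for x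
  proof -
    have "sr_pdf b m \<Omega> x = A * (x / b) * exp (-(x^2) / (2*b)) * hyp1F1 m 1 (q * x^2 / (2*b))"
      using \<open>x \<ge> 0\<close> by (simp add: sr_pdf_def A_def z)
    also have "\<dots> \<le> A * (x / b) * exp (-(x^2) / (2*b)) * (D * exp (\<beta> * (q * x^2 / (2*b))))"
      using D[of "q * x^2 / (2*b)"] q \<open>A \<ge> 0\<close> \<open>x \<ge> 0\<close> assms by (intro mult_left_mono) auto
    also have "\<dots> = (A * D / b) * x * exp (- \<alpha> * x^2)"
      using assms by (simp add: \<alpha>_def mult_exp_exp field_simps)
    finally show ?thesis .
  qed
  with \<open>\<alpha> > 0\<close> nonneg show thesis by (rule that)
qed

lemma integrable_gaussian_quartic:
  fixes \<alpha> :: real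
  assumes "\<alpha> > 0"
  shows "integrable lborel (\<lambda>x. exp (- \<alpha> * x^2) * (1 + x^4))"
proof -
  define \<sigma> where "\<sigma> = sqrt (1 / (2*\<alpha>))"
  have \<sigma>: "\<sigma> > 0" "\<sigma>^2 = 1 / (2*\<alpha>)"
    using assms by (simp_all add: \<sigma>_def)
  define c where "c = sqrt (2 * pi * \<sigma>^2)"
  have "c > 0"
    using \<sigma>(1) by (simp add: c_def)
  have "normal_density 0 \<sigma> x = exp (- \<alpha> * x^2) / c" for x
    using \<sigma> assms by (simp add: normal_density_def c_def field_simps)
  then have eq: "exp (- \<alpha> * x^2) * (1 + x^4) =
      c * (normal_density 0 \<sigma> x + normal_density 0 \<sigma> x * x^4)" for x
    using \<open>c > 0\<close> by (simp add: field_simps)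
  show ?thesis
    unfolding eq
    using integrable_normal_moment[where \<mu>=0 and \<sigma>=\<sigma> and k=4] \<sigma>(1)
    by (intro integrable_mult_right Bochner_Integration.integrable_add integrable_normal_density)
      simp_all
qed

lemma integrable_comp_of_gaussian_tail_density:
  fixes X :: "'a \<Rightarrow> real" and p g :: "real \<Rightarrow> real"
  assumes X: "distributed M lborel X (\<lambda>x. ennreal (p x))"
    and p_nonneg: "\<And>x. 0 \<le> p x" and p_nonpos: "\<And>x. x \<le> 0 \<Longrightarrow> p x = 0"
    and p_tail: "\<And>x. x \<ge> 0 \<Longrightarrow> p x \<le> C * x * exp (- \<alpha> * x^2)" and "\<alpha> > 0"
    and g: "g \<in> borel_measurable borel" and g_bound: "\<And>x. x > 0 \<Longrightarrow> \<bar>g x\<bar> \<le> K * (1/x + x^3)"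
  shows "integrable M (\<lambda>s. g (X s))"
proof -
  have "p \<in> borel_measurable lborel"
    using distributed_real_measurable[OF _ X] p_nonneg by blast
  have bound: "norm (p x * g x) \<le> norm ((C * K) * (exp (- \<alpha> * x^2) * (1 + x^4)))" for x
  proof (cases "x > 0")
    case True
    have "norm (p x * g x) = p x * \<bar>g x\<bar>"
      using p_nonneg[of x] by (simp add: abs_mult)
    also have "\<dots> \<le> (C * x * exp (- \<alpha> * x^2)) * (K * (1/x + x^3))"
      using True by (intro mult_mono p_tail g_bound order_trans[OF p_nonneg p_tail]) simp_all
    also have "x * (1/x + x^3) = 1 + x^4"
      using True by (simp add: distrib_left flip: power_Suc)
    then have "(C * x * exp (- \<alpha> * x^2)) * (K * (1/x + x^3)) =
        (C * K) * (exp (- \<alpha> * x^2) * (1 + x^4))"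
      by (metis mult.assoc mult.commute mult.left_commute)
    finally show ?thesis
      by simp
  qed (simp add: p_nonpos)
  have "integrable lborel (\<lambda>x. p x * g x)"
  proof (rule Bochner_Integration.integrable_bound)
    show "integrable lborel (\<lambda>x. (C * K) * (exp (- \<alpha> * x^2) * (1 + x^4)))"
      using integrable_gaussian_quartic[OF \<open>\<alpha> > 0\<close>] by (rule integrable_mult_right)
    show "(\<lambda>x. p x * g x) \<in> borel_measurable lborel"
      using \<open>p \<in> borel_measurable lborel\<close> g by measurable
  qed (use bound in simp)
  then show ?thesis
    using distributed_integrable[OF X] g p_nonneg by simp
qed

lemma AE_pos_of_density_nonpos_eq_0:
  fixes X :: "'a \<Rightarrow> real"
  assumes X: "distributed M lborel X (\<lambda>x. ennreal (p x))" and p_nonpos: "\<And>x. x \<le> 0 \<Longrightarrow> p x = 0"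
  shows "AE s in M. X s > 0"
proof -
  have "p x > 0 \<Longrightarrow> x > 0" for x
    using p_nonpos[of x] by (cases "x > 0") auto
  then have "AE x in density lborel (\<lambda>x. ennreal (p x)). x > 0"
    using distributed_borel_measurable[OF X] by (subst AE_density) simp_all
  then have "AE x in distr M lborel X. x > 0"
    unfolding distributed_distr_eq_density[OF X] .
  then show ?thesis
    by (rule AE_distrD[OF distributed_measurable[OF X]])
qed

lemma powr_le_inverse_plus_cube:
  fixes x p :: real
  assumes "x > 0" "-1 \<le> p" "p \<le> 3"
  shows "x powr p \<le> 1/x + x^3"
proof (cases "x \<le> 1")
  case True
  then have "x powr p \<le> x powr -1"
    using assms by (intro powr_mono') auto
  then show ?thesis
    using assms by (simp add: powr_minus_divide add_increasing2)
next
  case False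
  then have "x powr p \<le> x powr 3"
    using assms by (intro powr_mono) auto
  then show ?thesis
    using assms by (simp add: add_increasing)
qed

context
  fixes M :: "'a measure" and h :: "'a \<Rightarrow> real" and b m \<Omega> :: real
  assumes h_distributed: "distributed M lborel h (\<lambda>x. ennreal (sr_pdf b m \<Omega> x))"
    and "b > 0" "m > 0" "\<Omega> \<ge> 0"
begin

lemma shadowed_rician_AE_pos: "AE s in M. h s > 0"
  using h_distributed sr_pdf_nonpos by (rule AE_pos_of_density_nonpos_eq_0)

lemma shadowed_rician_integrable:
  assumes "g \<in> borel_measurable borel" "\<And>x. x > 0 \<Longrightarrow> \<bar>g x\<bar> \<le> K * (1/x + x^3)"
  shows "integrable M (\<lambda>s. g (h s))"
proof -
  obtain \<alpha> C where "\<alpha> > 0" and nonneg: "\<And>x. 0 \<le> sr_pdf b m \<Omega> x"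
    and tail: "\<And>x. x \<ge> 0 \<Longrightarrow> sr_pdf b m \<Omega> x \<le> C * x * exp (- \<alpha> * x^2)"
    using sr_pdf_gaussian_tail[OF \<open>b > 0\<close> \<open>m > 0\<close> \<open>\<Omega> \<ge> 0\<close>] by blast
  show ?thesis
    by (rule integrable_comp_of_gaussian_tail_density
        [OF h_distributed nonneg sr_pdf_nonpos tail \<open>\<alpha> > 0\<close> assms])
qed

lemma shadowed_rician_integrable_powr:
  assumes "-1 \<le> p" "p \<le> 3"
  shows "integrable M (\<lambda>s. h s powr p)"
proof (rule shadowed_rician_integrable[where g="\<lambda>x. x powr p" and K=1])
  show "(\<lambda>x. x powr p) \<in> borel_measurable borel"
    by measurable
  show "\<bar>x powr p\<bar> \<le> 1 * (1/x + x^3)" if "x > 0" for x :: real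
    using powr_le_inverse_plus_cube[OF that assms] by simp
qed

lemma shadowed_rician_integrable_snr:
  assumes "K \<ge> 0"
  shows "integrable M (\<lambda>s. K * (h s)^2)" "integrable M (\<lambda>s. ln (1 + K * (h s)^2))"
proof -
  have sq: "K * x^2 \<le> K * (1/x + x^3)" if "x > 0" for x :: real
    using powr_le_inverse_plus_cube[OF that, of 2] that assms by (simp add: mult_left_mono)
  show "integrable M (\<lambda>s. K * (h s)^2)"
  proof (rule shadowed_rician_integrable[where g="\<lambda>x. K * x^2" and K=K])
    show "\<bar>K * x^2\<bar> \<le> K * (1/x + x^3)" if "x > 0" for x :: real
      using sq[OF that] assms by simp
  qed measurable
  have ln_le: "\<bar>ln (1 + K * x^2)\<bar> \<le> K * x^2" for x :: real
    using assms ln_add_one_self_le_self[of "K * x^2"] by simp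
  show "integrable M (\<lambda>s. ln (1 + K * (h s)^2))"
  proof (rule shadowed_rician_integrable[where g="\<lambda>x. ln (1 + K * x^2)" and K=K])
    show "\<bar>ln (1 + K * x^2)\<bar> \<le> K * (1/x + x^3)" if "x > 0" for x :: real
      using ln_le[of x] sq[OF that] by linarith
  qed measurable
qed

end

section \<open>The moment generating function near 0\<close>

lemma abs_exp_sub_one_sub_le: "\<bar>exp y - 1 - y\<bar> \<le> y^2 / 2 * exp \<bar>y\<bar>" for y :: real
proof -
  obtain t where t: "\<bar>t\<bar> \<le> \<bar>y\<bar>" "exp y = (\<Sum>m<2. y ^ m / fact m) + exp t / fact 2 * y ^ 2"
    using Maclaurin_exp_le[of y 2] by blast
  then have "\<bar>exp y - 1 - y\<bar> = exp t / 2 * y^2"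
    by (simp add: numeral_2_eq_2)
  also have "\<dots> \<le> exp \<bar>y\<bar> / 2 * y^2"
    using t(1) by (intro mult_right_mono divide_right_mono) auto
  finally show ?thesis
    by (simp add: mult_ac)
qed

lemma exp_abs_le_exp_plus_exp_minus: "exp \<bar>t\<bar> \<le> exp t + exp (- t)" for t :: real
  by (cases "t \<ge> 0") simp_all

lemma abs_exp_mult_sub_one_sub_le:
  fixes a w t :: real
  assumes "a > 0" "\<bar>w\<bar> \<le> a / 2"
  shows "\<bar>exp (w * t) - 1 - w * t\<bar> \<le> w^2 * (4 / a^2) * (exp (a * t) + exp (- a * t))"
proof -
  define y where "y = a * \<bar>t\<bar> / 2"
  have "y \<ge> 0"
    using assms by (simp add: y_def)
  have wt: "\<bar>w * t\<bar> \<le> y"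
    using mult_right_mono[OF assms(2) abs_ge_zero[of t]] by (simp add: y_def abs_mult)
  have t_sq: "t^2 = (4 / a^2) * y^2"
    using assms by (simp add: y_def field_simps)
  have "y^2 / 2 \<le> exp y"
    using exp_lower_Taylor_quadratic[OF \<open>y \<ge> 0\<close>] \<open>y \<ge> 0\<close> by simp
  have "\<bar>exp (w * t) - 1 - w * t\<bar> \<le> (w * t)^2 / 2 * exp \<bar>w * t\<bar>"
    by (rule abs_exp_sub_one_sub_le)
  also have "\<dots> = w^2 * (4 / a^2) * (y^2 / 2) * exp \<bar>w * t\<bar>"
    by (simp add: power_mult_distrib t_sq)
  also have "\<dots> \<le> w^2 * (4 / a^2) * (y^2 / 2) * exp y"
    using wt by (intro mult_left_mono) auto
  also have "\<dots> \<le> w^2 * (4 / a^2) * exp y * exp y"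
    using \<open>y^2 / 2 \<le> exp y\<close> by (intro mult_right_mono mult_left_mono) auto
  also have "\<dots> = w^2 * (4 / a^2) * exp \<bar>a * t\<bar>"
    using assms by (simp add: y_def mult.assoc abs_mult flip: exp_add)
  also have "\<dots> \<le> w^2 * (4 / a^2) * (exp (a * t) + exp (- a * t))"
    using exp_abs_le_exp_plus_exp_minus[of "a * t"] by (intro mult_left_mono) auto
  finally show ?thesis .
qed

lemma has_real_derivative_0_of_quadratic_remainder:
  fixes \<phi> :: "real \<Rightarrow> real"
  assumes "\<delta> > 0" and remainder: "\<And>w. \<bar>w\<bar> \<le> \<delta> \<Longrightarrow> \<bar>\<phi> w - \<phi> 0 - w * L\<bar> \<le> w^2 * B"
  shows "(\<phi> has_real_derivative L) (at 0)"
proof -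
  have "eventually (\<lambda>w. norm ((\<phi> w - \<phi> 0) / (w - 0) - L) \<le> \<bar>w\<bar> * B) (at 0)"
    unfolding eventually_at
  proof (intro exI[of _ \<delta>] conjI ballI impI)
    fix w :: real
    assume "w \<noteq> 0 \<and> dist w 0 < \<delta>"
    then have "w \<noteq> 0" "\<bar>w\<bar> \<le> \<delta>"
      by auto
    have "(\<phi> w - \<phi> 0) / (w - 0) - L = (\<phi> w - \<phi> 0 - w * L) / w"
      using \<open>w \<noteq> 0\<close> by (simp add: field_simps)
    then have "norm ((\<phi> w - \<phi> 0) / (w - 0) - L) = \<bar>\<phi> w - \<phi> 0 - w * L\<bar> / \<bar>w\<bar>"
      by simp
    also have "\<dots> \<le> \<bar>w\<bar> * \<bar>w\<bar> * B / \<bar>w\<bar>"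
      using remainder[OF \<open>\<bar>w\<bar> \<le> \<delta>\<close>] by (intro divide_right_mono) (simp_all add: power2_eq_square)
    also have "\<dots> = \<bar>w\<bar> * B"
      using \<open>w \<noteq> 0\<close> by (simp del: abs_mult_self_eq)
    finally show "norm ((\<phi> w - \<phi> 0) / (w - 0) - L) \<le> \<bar>w\<bar> * B" .
  qed (use \<open>\<delta> > 0\<close> in simp)
  moreover have "((\<lambda>w. \<bar>w\<bar> * B) \<longlongrightarrow> 0) (at 0)"
    by (auto intro!: tendsto_eq_intros)
  ultimately have "((\<lambda>w. (\<phi> w - \<phi> 0) / (w - 0) - L) \<longlongrightarrow> 0) (at 0)"
    by (rule Lim_null_comparison)
  then show ?thesis
    unfolding has_field_derivative_iff LIM_zero_iff .
qed

context
  fixes M :: "'a measure" and T :: "'a \<Rightarrow> real" and a :: real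
  assumes T_measurable: "T \<in> borel_measurable M" and "a > 0"
    and integrable_exp_pos: "integrable M (\<lambda>s. exp (a * T s))"
    and integrable_exp_neg: "integrable M (\<lambda>s. exp (- a * T s))"
begin

lemma integrable_exp_mult_of_exp_pm:
  assumes "\<bar>w\<bar> \<le> a"
  shows "integrable M (\<lambda>s. exp (w * T s))"
proof (rule Bochner_Integration.integrable_bound)
  show "integrable M (\<lambda>s. exp (a * T s) + exp (- a * T s))"
    using integrable_exp_pos integrable_exp_neg by (rule Bochner_Integration.integrable_add)
  have "exp (w * t) \<le> exp (a * t) + exp (- a * t)" for t
  proof -
    have "w * t \<le> \<bar>w\<bar> * \<bar>t\<bar>"
      by (metis abs_ge_self abs_mult)
    also have "\<dots> \<le> \<bar>a * t\<bar>"
      using mult_right_mono[OF assms abs_ge_zero[of t]] \<open>a > 0\<close> by (simp add: abs_mult)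
    finally have "exp (w * t) \<le> exp \<bar>a * t\<bar>"
      by simp
    then show ?thesis
      using order.trans[OF _ exp_abs_le_exp_plus_exp_minus[of "a * t"]] by simp
  qed
  then show "AE s in M. norm (exp (w * T s)) \<le> norm (exp (a * T s) + exp (- a * T s))"
    by (intro AE_I2) (simp add: add_pos_pos order.trans)
qed (use T_measurable in measurable)

lemma integrable_of_exp_pm: "integrable M T"
proof (rule Bochner_Integration.integrable_bound)
  show "integrable M (\<lambda>s. (exp (a * T s) + exp (- a * T s)) / a)"
    using integrable_exp_pos integrable_exp_neg
    by (intro integrable_divide Bochner_Integration.integrable_add)
  have "\<bar>t\<bar> \<le> (exp (a * t) + exp (- a * t)) / a" for t
  proof -
    have "a * \<bar>t\<bar> \<le> exp (a * \<bar>t\<bar>)"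
      using exp_ge_add_one_self[of "a * \<bar>t\<bar>"] by linarith
    also have "\<dots> = exp \<bar>a * t\<bar>"
      using \<open>a > 0\<close> by (simp add: abs_mult)
    also have "\<dots> \<le> exp (a * t) + exp (- a * t)"
      using exp_abs_le_exp_plus_exp_minus[of "a * t"] by simp
    finally show ?thesis
      using \<open>a > 0\<close> by (simp add: field_simps)
  qed
  then show "AE s in M. norm (T s) \<le> norm ((exp (a * T s) + exp (- a * T s)) / a)"
    using \<open>a > 0\<close> by (intro AE_I2) (simp add: order.trans[OF _ abs_ge_self])
qed (rule T_measurable)

lemma mgf_has_field_derivative_0:
  assumes "prob_space M"
  shows "((\<lambda>w. \<integral>s. exp (w * T s) \<partial>M) has_field_derivative (\<integral>s. T s \<partial>M)) (at 0)"
proof -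
  interpret prob_space M by fact
  define \<phi> where "\<phi> w = (\<integral>s. exp (w * T s) \<partial>M)" for w
  define B where "B = (4 / a^2) * (\<integral>s. exp (a * T s) + exp (- a * T s) \<partial>M)"
  have remainder: "\<bar>\<phi> w - \<phi> 0 - w * expectation T\<bar> \<le> w^2 * B" if "\<bar>w\<bar> \<le> a / 2" for w
  proof -
    have int_w: "integrable M (\<lambda>s. exp (w * T s))"
      using that \<open>a > 0\<close> by (intro integrable_exp_mult_of_exp_pm) simp
    have int_rem: "integrable M (\<lambda>s. exp (w * T s) - 1 - w * T s)"
      using int_w integrable_of_exp_pm by auto
    have "\<phi> w - \<phi> 0 - w * expectation T = (\<integral>s. exp (w * T s) - 1 - w * T s \<partial>M)"
      using int_w integrable_of_exp_pm by (simp add: \<phi>_def prob_space)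
    also have "\<bar>\<dots>\<bar> \<le> (\<integral>s. \<bar>exp (w * T s) - 1 - w * T s\<bar> \<partial>M)"
      by (rule integral_abs_bound)
    also have "\<dots> \<le> (\<integral>s. w^2 * (4 / a^2) * (exp (a * T s) + exp (- a * T s)) \<partial>M)"
      using int_rem integrable_exp_pos integrable_exp_neg
        abs_exp_mult_sub_one_sub_le[OF \<open>a > 0\<close> that]
      by (intro integral_mono) auto
    also have "\<dots> = w^2 * B"
      by (simp add: B_def)
    finally show ?thesis .
  qed
  have "(\<phi> has_real_derivative expectation T) (at 0)"
    by (rule has_real_derivative_0_of_quadratic_remainder[where \<delta>="a / 2", OF _ remainder])
      (use \<open>a > 0\<close> in simp)
  then show ?thesis
    unfolding \<phi>_def[abs_def] .
qed

end

section \<open>Jensen-type bounds\<close>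

lemma (in prob_space) jensens_inequality_concave:
  fixes q :: "real \<Rightarrow> real"
  assumes "integrable M X" "AE x in M. X x \<in> I"
    and "I = {a <..< b} \<or> I = {a <..} \<or> I = {..< b} \<or> I = UNIV"
    and "integrable M (\<lambda>x. q (X x))" "concave_on I q"
  shows "expectation (\<lambda>x. q (X x)) \<le> q (expectation X)"
  using jensens_inequality[of X I a b "\<lambda>x. - q x"] assms by (simp add: concave_on_def)

lemma concave_on_ln_one_plus: "concave_on {-1<..} (\<lambda>x. ln (1 + x))"
proof (rule f''_le0_imp_concave)
  fix x :: real
  assume "x \<in> {-1<..}"
  then show "((\<lambda>x. ln (1 + x)) has_real_derivative 1 / (1 + x)) (at x)"
    and "((\<lambda>x. 1 / (1 + x)) has_real_derivative - 1 / (1 + x)^2) (at x)"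
    by (auto intro!: derivative_eq_intros simp: power2_eq_square)
qed simp_all

lemma concave_on_one_minus_inverse_square: "concave_on {-1<..} (\<lambda>x. 1 - 1 / (1 + x)^2)"
proof (rule f''_le0_imp_concave)
  fix x :: real
  assume "x \<in> {-1<..}"
  then show "((\<lambda>x. 1 - 1 / (1 + x)^2) has_real_derivative 2 / (1 + x)^3) (at x)"
    and "((\<lambda>x. 2 / (1 + x)^3) has_real_derivative - 6 / (1 + x)^4) (at x)"
    by (auto intro!: derivative_eq_intros simp: field_simps)
      (simp add: algebra_simps eval_nat_numeral)
qed simp_all

lemma convex_on_ln_one_plus_exp:
  assumes "K \<ge> 0"
  shows "convex_on UNIV (\<lambda>y. ln (1 + K * exp y))"
proof (rule f''_ge0_imp_convex)
  fix y :: real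
  have "1 + K * exp y > 0"
    using assms by (simp add: add_pos_nonneg)
  then show "((\<lambda>y. ln (1 + K * exp y)) has_real_derivative K * exp y / (1 + K * exp y)) (at y)"
    and "((\<lambda>y. K * exp y / (1 + K * exp y))
      has_real_derivative K * exp y / (1 + K * exp y)^2) (at y)"
    by (auto intro!: derivative_eq_intros simp: field_simps power2_eq_square)
  show "K * exp y / (1 + K * exp y)^2 \<ge> 0"
    using assms by simp
qed simp

context prob_space
begin

lemma expectation_ln_one_plus_le:
  fixes X :: "'a \<Rightarrow> real"
  assumes "integrable M X" "AE s in M. X s > -1" "integrable M (\<lambda>s. ln (1 + X s))"
  shows "expectation (\<lambda>s. ln (1 + X s)) \<le> ln (1 + expectation X)"
  by (rule jensens_inequality_concave[where I="{-1<..}" and a="-1"])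
    (use assms concave_on_ln_one_plus in auto)

lemma expectation_sqrt_le:
  fixes U :: "'a \<Rightarrow> real"
  assumes U: "integrable M U" "AE s in M. U s \<ge> 0"
  shows "expectation (\<lambda>s. sqrt (U s)) \<le> sqrt (expectation U)"
proof -
  have "sqrt \<bar>u\<bar> \<le> 1 + \<bar>u\<bar>" for u :: real
  proof -
    have "sqrt \<bar>u\<bar> \<le> sqrt ((1 + \<bar>u\<bar>)^2)"
      by (intro real_sqrt_le_mono) (simp add: power2_eq_square algebra_simps)
    then show ?thesis
      by simp
  qed
  then have int_sqrt: "integrable M (\<lambda>s. sqrt (U s))"
    using U(1) by (rule_tac Bochner_Integration.integrable_bound[where f="\<lambda>s. 1 + \<bar>U s\<bar>"])
      (auto simp flip: real_sqrt_abs')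
  have sq: "AE s in M. (sqrt (U s))^2 = U s"
    using U(2) by eventually_elim simp
  have int_sq: "integrable M (\<lambda>s. (sqrt (U s))^2)"
    by (rule integrable_cong_AE_imp[OF U(1)]) (use int_sqrt sq in auto)
  have "(expectation (\<lambda>s. sqrt (U s)))^2 \<le> expectation (\<lambda>s. (sqrt (U s))^2)"
    by (rule jensens_inequality[OF int_sqrt _ _ int_sq convex_power2]) simp_all
  also have "\<dots> = expectation U"
    by (rule integral_cong_AE) (use int_sqrt U(1) sq in auto)
  finally show ?thesis
    by (rule real_le_rsqrt)
qed

lemma integrable_sqrt_one_minus_inverse_square:
  fixes X :: "'a \<Rightarrow> real"
  assumes "X \<in> borel_measurable M" "\<And>s. X s \<ge> 0"
  shows "integrable M (\<lambda>s. sqrt (1 - 1 / (1 + X s)^2))"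
proof (rule integrable_const_bound[where B=1])
  have bounds: "0 \<le> 1 - 1 / (1 + x)^2 \<and> 1 - 1 / (1 + x)^2 \<le> 1" if "x \<ge> 0" for x :: real
    using that by (simp add: field_simps)
  show "AE s in M. norm (sqrt (1 - 1 / (1 + X s)^2)) \<le> 1"
    using bounds[OF assms(2)] by (intro AE_I2) simp
  show "(\<lambda>s. sqrt (1 - 1 / (1 + X s)^2)) \<in> borel_measurable M"
    using assms(1) by measurable
qed

lemma expectation_sqrt_one_minus_inverse_square_le:
  fixes X :: "'a \<Rightarrow> real"
  assumes X: "integrable M X" "AE s in M. X s \<ge> 0"
  shows "expectation (\<lambda>s. sqrt (1 - 1 / (1 + X s)^2)) \<le> sqrt (1 - 1 / (1 + expectation X)^2)"
proof -
  have bounds: "0 \<le> 1 - 1 / (1 + x)^2 \<and> 1 - 1 / (1 + x)^2 \<le> 1" if "x \<ge> 0" for x :: real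
    using that by (simp add: field_simps)
  have "AE s in M. norm (1 - 1 / (1 + X s)^2) \<le> 1"
    using X(2) by eventually_elim (use bounds in auto)
  then have int: "integrable M (\<lambda>s. 1 - 1 / (1 + X s)^2)"
    using borel_measurable_integrable[OF X(1)] by (intro integrable_const_bound) auto
  have "expectation (\<lambda>s. sqrt (1 - 1 / (1 + X s)^2)) \<le> sqrt (expectation (\<lambda>s. 1 - 1 / (1 + X s)^2))"
  proof (rule expectation_sqrt_le[OF int])
    show "AE s in M. 0 \<le> 1 - 1 / (1 + X s)^2"
      using X(2) by eventually_elim (use bounds in auto)
  qed
  also have "\<dots> \<le> sqrt (1 - 1 / (1 + expectation X)^2)"
  proof (rule real_sqrt_le_mono)
    have "AE s in M. X s \<in> {-1<..}"
      using X(2) by eventually_elim auto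
    then show "expectation (\<lambda>s. 1 - 1 / (1 + X s)^2) \<le> 1 - 1 / (1 + expectation X)^2"
      by (rule jensens_inequality_concave
          [where a="-1", OF X(1) _ _ int concave_on_one_minus_inverse_square]) simp
  qed
  finally show ?thesis .
qed

lemma ln_one_plus_exp_expectation_le:
  fixes T :: "'a \<Rightarrow> real"
  assumes T: "integrable M T" and "K \<ge> 0"
  shows "ln (1 + K * exp (expectation T)) \<le> expectation (\<lambda>s. ln (1 + K * exp (T s)))"
proof -
  have "\<bar>ln (1 + K * exp t)\<bar> \<le> ln (1 + K) + \<bar>t\<bar>" for t :: real
  proof -
    have "1 + K * exp t \<le> (1 + K) * exp \<bar>t\<bar>"
      using \<open>K \<ge> 0\<close> by (simp add: distrib_right mult_left_mono add_mono)
    then have "ln (1 + K * exp t) \<le> ln ((1 + K) * exp \<bar>t\<bar>)"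
      using \<open>K \<ge> 0\<close> by (simp add: add_pos_nonneg)
    then show ?thesis
      using \<open>K \<ge> 0\<close> by (simp add: ln_mult add_pos_nonneg)
  qed
  then have int: "integrable M (\<lambda>s. ln (1 + K * exp (T s)))"
    using T by (rule_tac Bochner_Integration.integrable_bound[where f="\<lambda>s. ln (1 + K) + \<bar>T s\<bar>"])
      (auto intro: order.trans[OF _ abs_ge_self])
  show ?thesis
    by (rule jensens_inequality[OF T _ _ int convex_on_ln_one_plus_exp[OF \<open>K \<ge> 0\<close>]]) simp_all
qed

end

(* No hypothesis on n is needed, as both sides are 0 for n = 0 (division by zero). *)
lemma sqrt_dispersion_div:
  fixes x :: real
  assumes "x \<noteq> -1"
  shows "sqrt (dispersion x / real n) = sqrt (1 - 1 / (1 + x)^2) / (ln 2 * sqrt (real n))"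
proof -
  have "1 + x \<noteq> 0"
    using assms by linarith
  then have "1 - 1 / (1 + x)^2 = ((1 + x)^2 - 1) / (1 + x)^2"
    by (simp add: diff_divide_distrib)
  also have "(1 + x)^2 - 1 = x^2 + 2*x"
    by (simp add: power2_eq_square algebra_simps)
  finally have "(x^2 + 2*x) / (1 + x)^2 = 1 - 1 / (1 + x)^2" ..
  then have "dispersion x / real n = (1 - 1 / (1 + x)^2) / ((ln 2)^2 * real n)"
    by (simp add: dispersion_def)
  then show ?thesis
    by (simp add: real_sqrt_divide real_sqrt_mult)
qed

context prob_space
begin

lemma ln_one_plus_exp_deriv_moment_le:
  fixes h :: "'a \<Rightarrow> real"
  assumes h_pos: "AE s in M. h s > 0" and h: "h \<in> borel_measurable M" and "a > 0" "K \<ge> 0"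
    and "integrable M (\<lambda>s. h s powr a)" "integrable M (\<lambda>s. h s powr - a)"
  shows "ln (1 + K * exp (2 * deriv (\<lambda>w. expectation (\<lambda>s. h s powr w)) 0))
    \<le> expectation (\<lambda>s. ln (1 + K * (h s)^2))"
proof -
  have powr_eq: "AE s in M. h s powr w = exp (w * ln (h s))" for w
    using h_pos by eventually_elim (simp add: powr_def)
  have ln_h: "(\<lambda>s. ln (h s)) \<in> borel_measurable M"
    using h by measurable
  have exp_pm: "integrable M (\<lambda>s. exp (a * ln (h s)))" "integrable M (\<lambda>s. exp (- a * ln (h s)))"
    by (rule integrable_cong_AE_imp[OF assms(5) _ powr_eq]
        integrable_cong_AE_imp[OF assms(6) _ powr_eq];
        use h in measurable)+
  have int_ln: "integrable M (\<lambda>s. ln (h s))"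
    using ln_h \<open>a > 0\<close> exp_pm by (rule integrable_of_exp_pm)
  have "(\<lambda>w. expectation (\<lambda>s. h s powr w)) = (\<lambda>w. expectation (\<lambda>s. exp (w * ln (h s))))"
    by (intro ext integral_cong_AE powr_eq; use h in measurable)
  then have deriv_eq: "deriv (\<lambda>w. expectation (\<lambda>s. h s powr w)) 0 = expectation (\<lambda>s. ln (h s))"
    using mgf_has_field_derivative_0[OF ln_h \<open>a > 0\<close> exp_pm prob_space_axioms]
    by (simp add: DERIV_imp_deriv)
  have "ln (1 + K * exp (expectation (\<lambda>s. 2 * ln (h s))))
      \<le> expectation (\<lambda>s. ln (1 + K * exp (2 * ln (h s))))"
    using int_ln \<open>K \<ge> 0\<close> by (intro ln_one_plus_exp_expectation_le) auto
  also have "\<dots> = expectation (\<lambda>s. ln (1 + K * (h s)^2))"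
  proof (intro integral_cong_AE)
    have exp_2ln: "exp (2 * ln x) = x^2" if "x > 0" for x :: real
      using powr_realpow[OF that, of 2] that by (simp add: powr_def)
    show "AE s in M. ln (1 + K * exp (2 * ln (h s))) = ln (1 + K * (h s)^2)"
      using h_pos by eventually_elim (simp add: exp_2ln)
  qed (use h in measurable)
  finally show ?thesis
    by (simp add: deriv_eq)
qed

lemma expectation_secrecy_rate_ge_expectations:
  fixes SB SE :: "'a \<Rightarrow> real"
  assumes SB: "integrable M SB" "\<And>s. SB s \<ge> 0" "integrable M (\<lambda>s. ln (1 + SB s))"
    and SE: "integrable M SE" "\<And>s. SE s \<ge> 0" "integrable M (\<lambda>s. ln (1 + SE s))"
  shows "expectation (\<lambda>s. log 2 (1 + SB s)) - expectation (\<lambda>s. log 2 (1 + SE s))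
      - qB / (ln 2 * sqrt (real n)) * expectation (\<lambda>s. sqrt (1 - 1 / (1 + SB s)^2))
      - qE / (ln 2 * sqrt (real n)) * expectation (\<lambda>s. sqrt (1 - 1 / (1 + SE s)^2))
    \<le> expectation (\<lambda>s. max 0 (log 2 (1 + SB s) - log 2 (1 + SE s))
      - sqrt (dispersion (SB s) / real n) * qB - sqrt (dispersion (SE s) / real n) * qE)"
proof -
  have int: "integrable M (\<lambda>s. log 2 (1 + SB s))" "integrable M (\<lambda>s. log 2 (1 + SE s))"
    "integrable M (\<lambda>s. sqrt (1 - 1 / (1 + SB s)^2))" "integrable M (\<lambda>s. sqrt (1 - 1 / (1 + SE s)^2))"
    using SB SE by (auto simp: log_def intro: integrable_sqrt_one_minus_inverse_square)
  have "sqrt (dispersion x / real n) * q = q / (ln 2 * sqrt (real n)) * sqrt (1 - 1 / (1 + x)^2)"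
    if "x \<ge> 0" for x q
    using that sqrt_dispersion_div[of x n] by simp
  then have "expectation (\<lambda>s. log 2 (1 + SB s) - log 2 (1 + SE s)
        - qB / (ln 2 * sqrt (real n)) * sqrt (1 - 1 / (1 + SB s)^2)
        - qE / (ln 2 * sqrt (real n)) * sqrt (1 - 1 / (1 + SE s)^2))
      \<le> expectation (\<lambda>s. max 0 (log 2 (1 + SB s) - log 2 (1 + SE s))
        - sqrt (dispersion (SB s) / real n) * qB - sqrt (dispersion (SE s) / real n) * qE)"
    using int SB(2) SE(2) by (intro integral_mono) auto
  then show ?thesis
    using int by simp
qed

lemma expectation_secrecy_rate_ge:
  fixes SB SE :: "'a \<Rightarrow> real"
  assumes SB: "integrable M SB" "\<And>s. SB s \<ge> 0" "integrable M (\<lambda>s. ln (1 + SB s))"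
    and SE: "integrable M SE" "\<And>s. SE s \<ge> 0" "integrable M (\<lambda>s. ln (1 + SE s))"
    and "qB \<ge> 0" "qE \<ge> 0"
  shows "expectation (\<lambda>s. log 2 (1 + SB s)) - log 2 (1 + expectation SE)
      - qB / (ln 2 * sqrt (real n)) * sqrt (1 - 1 / (1 + expectation SB)^2)
      - qE / (ln 2 * sqrt (real n)) * sqrt (1 - 1 / (1 + expectation SE)^2)
    \<le> expectation (\<lambda>s. max 0 (log 2 (1 + SB s) - log 2 (1 + SE s))
      - sqrt (dispersion (SB s) / real n) * qB - sqrt (dispersion (SE s) / real n) * qE)"
proof -
  have "expectation (\<lambda>s. ln (1 + SE s)) \<le> ln (1 + expectation SE)"
  proof (rule expectation_ln_one_plus_le[OF SE(1) AE_I2 SE(3)])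
    show "SE s > -1" for s
      using SE(2)[of s] by linarith
  qed
  then have "expectation (\<lambda>s. log 2 (1 + SE s)) \<le> log 2 (1 + expectation SE)"
    by (simp add: log_def divide_right_mono)
  moreover have "qB / (ln 2 * sqrt (real n)) * expectation (\<lambda>s. sqrt (1 - 1 / (1 + SB s)^2))
      \<le> qB / (ln 2 * sqrt (real n)) * sqrt (1 - 1 / (1 + expectation SB)^2)"
    using SB \<open>qB \<ge> 0\<close>
    by (intro mult_left_mono expectation_sqrt_one_minus_inverse_square_le) simp_all
  moreover have "qE / (ln 2 * sqrt (real n)) * expectation (\<lambda>s. sqrt (1 - 1 / (1 + SE s)^2))
      \<le> qE / (ln 2 * sqrt (real n)) * sqrt (1 - 1 / (1 + expectation SE)^2)"
    using SE \<open>qE \<ge> 0\<close>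
    by (intro mult_left_mono expectation_sqrt_one_minus_inverse_square_le) simp_all
  ultimately show ?thesis
    using expectation_secrecy_rate_ge_expectations[OF SB SE, of qB n qE] by linarith
qed

end

theorem theorem1:
  fixes M :: "'a measure" and hB hE :: "'a \<Rightarrow> real"
    and n :: nat and eB \<delta> KB KE bB mB \<Omega>B bE mE \<Omega>E :: real
  assumes "prob_space M"
    and "n \<ge> 1"
    and "0 < eB" "eB \<le> 1/2" "0 < \<delta>" "\<delta> \<le> 1/2"
    and "KB > 0" "KE > 0"
    and "bB > 0" "mB > 0" "\<Omega>B \<ge> 0"
    and "bE > 0" "mE > 0" "\<Omega>E \<ge> 0"
    and "distributed M lborel hB (\<lambda>x. ennreal (sr_pdf bB mB \<Omega>B x))"
    and "distributed M lborel hE (\<lambda>x. ennreal (sr_pdf bE mE \<Omega>E x))"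
  shows
    "(let SNRB = (\<lambda>s. KB * (hB s)^2); SNRE = (\<lambda>s. KE * (hE s)^2);
          Rs = (\<lambda>s. max 0 (log 2 (1 + SNRB s) - log 2 (1 + SNRE s))
                    - sqrt (dispersion (SNRB s) / real n) * Qinv eB
                    - sqrt (dispersion (SNRE s) / real n) * Qinv \<delta>);
          \<phi>B = (\<lambda>w. integral\<^sup>L M (\<lambda>s. hB s powr w));
          SNRBbar = integral\<^sup>L M SNRB;
          SNREbar = integral\<^sup>L M SNRE;
          Rt = log 2 (1 + KB * exp (2 * deriv \<phi>B 0)) - log 2 (1 + SNREbar)
               - Qinv eB / (ln 2 * sqrt (real n)) * sqrt (1 - 1 / (1 + SNRBbar)^2)
               - Qinv \<delta> / (ln 2 * sqrt (real n)) * sqrt (1 - 1 / (1 + SNREbar)^2)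
      in integral\<^sup>L M Rs \<ge> Rt)"
proof -
  interpret prob_space M by fact
  note hB = assms(15,9-11) and hE = assms(16,12-14)
  have "hB \<in> borel_measurable M"
    using distributed_measurable[OF assms(15)] by simp
  then have "ln (1 + KB * exp (2 * deriv (\<lambda>w. expectation (\<lambda>s. hB s powr w)) 0))
      \<le> expectation (\<lambda>s. ln (1 + KB * (hB s)^2))"
    using shadowed_rician_AE_pos[OF hB] shadowed_rician_integrable_powr[OF hB, of 1]
      shadowed_rician_integrable_powr[OF hB, of "-1"] \<open>KB > 0\<close>
    by (intro ln_one_plus_exp_deriv_moment_le[where a=1]) auto
  then have bob: "log 2 (1 + KB * exp (2 * deriv (\<lambda>w. expectation (\<lambda>s. hB s powr w)) 0))
      \<le> expectation (\<lambda>s. log 2 (1 + KB * (hB s)^2))"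
    by (simp add: log_def divide_right_mono)
  note snrB = shadowed_rician_integrable_snr[OF hB less_imp_le[OF \<open>KB > 0\<close>]]
    and snrE = shadowed_rician_integrable_snr[OF hE less_imp_le[OF \<open>KE > 0\<close>]]
  have "0 \<le> KB * (hB s)^2" "0 \<le> KE * (hE s)^2" for s
    using \<open>KB > 0\<close> \<open>KE > 0\<close> by simp_all
  note rate = expectation_secrecy_rate_ge[OF snrB(1) this(1) snrB(2) snrE(1) this(2) snrE(2)
      Qinv_nonneg[OF \<open>0 < eB\<close> \<open>eB \<le> 1/2\<close>] Qinv_nonneg[OF \<open>0 < \<delta>\<close> \<open>\<delta> \<le> 1/2\<close>], of n]
  show ?thesis
    unfolding Let_def using bob rate by linarith
qed

end
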